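(* Let $\lambda>0$, $f$ twice continuously differentiable with $f(y)\le f(x)+\nabla f(x)^\top(y-x)+\frac12(y-x)^\top\nabla^2f(x)(y-x)+\frac{L_H}6\|y-x\|^3$ for the relevant points, $\varphi=f+\lambda\|\cdot\|_1$, and $0<\varepsilon_g<1$. Let $x^k\in\mathbb{R}^n$, $I^k_{\neq0}=\{i:x^k_i\neq0\}$, $I^k_0=\{i:x^k_i=0\}$, $S^k=\mathrm{Diag}(s)$ with $s_i=1$ if $|x^k_i|>\varepsilon_g^{1/2}$ and $s_i=x^k_i$ otherwise, $H^k_{\neq0}=(\nabla^2f(x^k))_{I^k_{\neq0}}$, $S^k_{\neq0}=S^k_{I^k_{\neq0}}$, and $g^k=g(x^k)$. Let $u$ be a unit vector with $u^\top S^k_{\neq0}H^k_{\neq0}S^k_{\neq0}u\le-\frac12\varepsilon_h$ (as returned by the minimum eigenvalue oracle), and let $d^k_{I^k_{\neq0}}=-\mathrm{sgn}((g^k_{I^k_{\neq0}})^\top S^k_{\neq0}u)\,|u^\top S^k_{\neq0}H^k_{\neq0}S^k_{\neq0}u|\,u$, $d^k_{I^k_0}=0$. Define $J^k_+=\{i:x^k_i>\varepsilon_g^{1/2},\ d^k_i<0\}$, $J^k_0=\{i:|x^k_i|\le\varepsilon_g^{1/2},\ d^k_i<0\}$, $J^k_-=\{i:x^k_i<-\varepsilon_g^{1/2},\ d^k_i>0\}$, and $t^k_+=\min_{i\in J^k_+}\{-x^k_i/d^k_i\}$, $t^k_-=\min_{i\in J^k_-}\{-x^k_i/d^k_i\}$,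 $t^k_0=\min_{i\in J^k_0}\{-1/d^k_i\}$ (each $+\infty$ if the corresponding set is empty). Then for every $t\in(0,\min\{t^k_+,t^k_-,t^k_0\}]$, $$\varphi(x^k+tS^kd^k)\le\varphi(x^k)+t(g^k_{\neq0})^\top S^k_{\neq0}d^k_{\neq0}+\frac{t^2}2(d^k_{\neq0})^\top S^k_{\neq0}H^k_{\neq0}S^k_{\neq0}d^k_{\neq0}+\frac{L_H}6t^3\|d^k_{\neq0}\|^3,$$ where $g^k_{\neq0}=g^k_{I^k_{\neq0}}$ and $d^k_{\neq0}=d^k_{I^k_{\neq0}}$.
   Context: $g(x)$ is defined by $g_i=(\nabla f(x))_i+\lambda$ if $x_i>0$, $(\nabla f(x))_i-\lambda$ if $x_i<0$, $(\nabla f(x))_i-\min\{\max\{-\lambda,(\nabla f(x))_i\},\lambda\}$ if $x_i=0$; $\mathrm{sgn}(0)=1$; $A_J$ denotes the principal submatrix (or subvector) on index set $J$. In the paper this is the situation of the second phase of HPGNCM at iteration $k$, in which the cubic upper bound on $f$ holds with constant $L_H$ on the level set $\{x:\varphi(x)\le\varphi(x^0)\}$ (f twice uniformly Lipschitz continuously differentiable near a bounded level set). *)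

theory Defs
  imports "HOL-Analysis.Analysis"
begin

text \<open>Sign with the paper's convention sgn(0) = 1.\<close>
definition sgn1 :: "real \<Rightarrow> real" where
  "sgn1 a = (if a \<ge> 0 then 1 else -1)"

definition l1norm :: "real^'n \<Rightarrow> real" where
  "l1norm x = (\<Sum>i\<in>UNIV. \<bar>x$i\<bar>)"

definition phi :: "(real^'n \<Rightarrow> real) \<Rightarrow> real \<Rightarrow> real^'n \<Rightarrow> real" where
  "phi f lam x = f x + lam * l1norm x"

definition gvec :: "(real^'n \<Rightarrow> real^'n) \<Rightarrow> real \<Rightarrow> real^'n \<Rightarrow> real^'n" where
  "gvec grad lam x = (\<chi> i. if x$i > 0 then grad x $ i + lam
                        else if x$i < 0 then grad x $ i - lam
                        else grad x $ i - min (max (-lam) (grad x $ i)) lam)"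

definition Inz :: "real^'n \<Rightarrow> 'n set" where
  "Inz x = {i. x$i \<noteq> 0}"

definition Izero :: "real^'n \<Rightarrow> 'n set" where
  "Izero x = {i. x$i = 0}"

definition svec :: "real \<Rightarrow> real^'n \<Rightarrow> real^'n" where
  "svec epsg x = (\<chi> i. if \<bar>x$i\<bar> > sqrt epsg then 1 else x$i)"

definition Smat :: "real \<Rightarrow> real^'n \<Rightarrow> real^'n^'n" where
  "Smat epsg x = (\<chi> i j. if i = j then svec epsg x $ i else 0)"

definition subquad :: "'n set \<Rightarrow> real^'n^'n \<Rightarrow> real^'n \<Rightarrow> real" where
  "subquad I A v = (\<Sum>i\<in>I. \<Sum>j\<in>I. v$i * A$i$j * v$j)"

definition subbil :: "'n set \<Rightarrow> real^'n \<Rightarrow> real^'n^'n \<Rightarrow> real^'n \<Rightarrow> real" where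
  "subbil I a A b = (\<Sum>i\<in>I. \<Sum>j\<in>I. a$i * A$i$j * b$j)"

definition subnorm :: "'n set \<Rightarrow> real^'n \<Rightarrow> real" where
  "subnorm I v = sqrt (\<Sum>i\<in>I. (v$i)^2)"

text \<open>Direction d^k built from the (sub)vector u (entries of u on I are used).\<close>
definition dir :: "real \<Rightarrow> real^'n \<Rightarrow> real^'n^'n \<Rightarrow> real^'n \<Rightarrow> real^'n \<Rightarrow> real^'n" where
  "dir epsg x H g u =
     (let I = Inz x; S = Smat epsg x in
      (\<chi> i. if i \<in> I then
              - sgn1 (subbil I g S u) * \<bar>subquad I (S ** H ** S) u\<bar> * u$i
            else 0))"

definition Jplus :: "real \<Rightarrow> real^'n \<Rightarrow> real^'n \<Rightarrow> 'n set" where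
  "Jplus epsg x d = {i. x$i > sqrt epsg \<and> d$i < 0}"

definition Jzero :: "real \<Rightarrow> real^'n \<Rightarrow> real^'n \<Rightarrow> 'n set" where
  "Jzero epsg x d = {i. \<bar>x$i\<bar> \<le> sqrt epsg \<and> d$i < 0}"

definition Jminus :: "real \<Rightarrow> real^'n \<Rightarrow> real^'n \<Rightarrow> 'n set" where
  "Jminus epsg x d = {i. x$i < - sqrt epsg \<and> d$i > 0}"

definition emin :: "'n set \<Rightarrow> ('n \<Rightarrow> real) \<Rightarrow> ereal" where
  "emin J h = (if J = {} then \<infinity> else ereal (Min (h ` J)))"

definition tplus :: "real \<Rightarrow> real^'n \<Rightarrow> real^'n \<Rightarrow> ereal" where
  "tplus epsg x d = emin (Jplus epsg x d) (\<lambda>i. - x$i / d$i)"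

definition tminus :: "real \<Rightarrow> real^'n \<Rightarrow> real^'n \<Rightarrow> ereal" where
  "tminus epsg x d = emin (Jminus epsg x d) (\<lambda>i. - x$i / d$i)"

definition tzero :: "real \<Rightarrow> real^'n \<Rightarrow> real^'n \<Rightarrow> ereal" where
  "tzero epsg x d = emin (Jzero epsg x d) (\<lambda>i. - 1 / d$i)"

end

theory Submission
  imports Defs
begin

text \<open>Along x + t S d the step bounds t+, t-, t0 keep every coordinate on its side of
  zero: a large coordinate moves by t d_i and does not cross zero before t = -x_i/d_i, and a
  small one is rescaled to x_i (1 + t d_i) with 1 + t d_i \<ge> 0 as long as t \<le> -1/d_i. Hence
  the l1 norm is affine along the step, with slope sgn(x)' S d, and this slope is exactly the
  \<lambda>-part of g' S d. The remaining terms of the cubic upper bound on f are rewritten on the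
  support of x, using |s_i| \<le> 1 for the cubic term.\<close>

lemma Smat_mult_vec: "Smat e x *v v = (\<chi> i. svec e x $ i * v $ i)"
  by (simp add: Smat_def matrix_vector_mult_def vec_eq_iff if_distrib if_distribR cong: if_cong)

lemma inner_Smat_right: "v \<bullet> (Smat e x *v w) = (Smat e x *v v) \<bullet> w"
  by (simp add: Smat_mult_vec inner_vec_def algebra_simps)

lemma abs_svec_le_1:
  assumes "epsg \<le> 1"
  shows "\<bar>svec epsg x $ i\<bar> \<le> 1"
proof -
  have "sqrt epsg \<le> 1"
    using assms by simp
  then show ?thesis
    by (auto simp: svec_def simp del: real_sqrt_le_1_iff)
qed

lemma norm_Smat_mult_le:
  assumes "epsg \<le> 1"
  shows "norm (Smat epsg x *v v) \<le> norm v"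
proof -
  have "(svec epsg x $ i * v $ i)\<^sup>2 \<le> (v $ i)\<^sup>2" for i
    using abs_svec_le_1[OF assms, of x i]
    by (simp add: power_mult_distrib abs_square_le_1 mult_left_le_one_le)
  then show ?thesis
    by (simp add: Smat_mult_vec norm_vec_def L2_set_def sum_mono)
qed

lemma emin_le:
  assumes "finite J" "i \<in> J" "ereal t \<le> emin J h"
  shows "t \<le> h i"
proof -
  have "J \<noteq> {}"
    using assms(2) by blast
  then have "t \<le> Min (h ` J)"
    using assms(3) by (simp add: emin_def)
  also have "\<dots> \<le> h i"
    using assms by simp
  finally show ?thesis .
qed

lemma dir_nth_outside: "i \<notin> Inz x \<Longrightarrow> dir epsg x H g u $ i = 0"
  by (simp add: dir_def Let_def)

lemma gvec_nth_nonzero: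
  "x $ i \<noteq> 0 \<Longrightarrow> gvec grad lam x $ i = grad x $ i + lam * sgn (x $ i)"
  by (auto simp: gvec_def sgn_if)

lemma sum_vanishing_outside:
  fixes h :: "'n::finite \<Rightarrow> real"
  assumes "\<And>i. i \<notin> I \<Longrightarrow> h i = 0"
  shows "sum h I = sum h UNIV"
  by (rule sum.mono_neutral_left) (auto simp: assms)

lemma subquad_eq_inner:
  assumes "\<And>i. i \<notin> I \<Longrightarrow> v $ i = 0"
  shows "subquad I A v = v \<bullet> (A *v v)"
proof -
  have "subquad I A v = (\<Sum>i\<in>UNIV. \<Sum>j\<in>UNIV. v $ i * A $ i $ j * v $ j)"
    unfolding subquad_def using assms
    by (subst sum_vanishing_outside[where I = I]) (auto intro!: sum.cong sum_vanishing_outside)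
  then show ?thesis
    by (simp add: inner_vec_def matrix_vector_mult_def sum_distrib_left mult.assoc)
qed

lemma subquad_Smat_Hess:
  assumes "\<And>i. i \<notin> I \<Longrightarrow> v $ i = 0"
  shows "subquad I (Smat e x ** H ** Smat e x) v
    = (Smat e x *v v) \<bullet> (H *v (Smat e x *v v))"
  by (simp add: subquad_eq_inner[OF assms] matrix_vector_mul_assoc[symmetric] inner_Smat_right)

lemma subbil_Smat:
  "subbil I a (Smat e x) b = (\<Sum>i\<in>I. a $ i * svec e x $ i * b $ i)"
  by (simp add: subbil_def Smat_def if_distrib if_distribR cong: if_cong)

lemma subnorm_eq_norm:
  assumes "\<And>i. i \<notin> I \<Longrightarrow> v $ i = 0"
  shows "subnorm I v = norm v"
  using assms by (simp add: subnorm_def norm_vec_def L2_set_def sum_vanishing_outside)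

lemma subbil_gvec_Smat:
  assumes "\<And>i. i \<notin> Inz x \<Longrightarrow> d $ i = 0"
  shows "subbil (Inz x) (gvec grad lam x) (Smat e x) d
    = grad x \<bullet> (Smat e x *v d) + lam * (\<Sum>i\<in>UNIV. sgn (x $ i) * svec e x $ i * d $ i)"
proof -
  have "subbil (Inz x) (gvec grad lam x) (Smat e x) d
      = (\<Sum>i\<in>Inz x. grad x $ i * svec e x $ i * d $ i + lam * (sgn (x $ i) * svec e x $ i * d $ i))"
    by (auto simp: subbil_Smat Inz_def gvec_nth_nonzero algebra_simps intro!: sum.cong)
  also have "\<dots> = (\<Sum>i\<in>UNIV. grad x $ i * svec e x $ i * d $ i + lam * (sgn (x $ i) * svec e x $ i * d $ i))"
    using assms by (intro sum_vanishing_outside) simp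
  finally show ?thesis
    by (simp add: sum.distrib sum_distrib_left Smat_mult_vec inner_vec_def mult.assoc)
qed

lemma abs_step_nth:
  assumes epsg: "0 \<le> epsg" and t: "0 < t"
    and tp: "ereal t \<le> tplus epsg x d"
    and tm: "ereal t \<le> tminus epsg x d"
    and tz: "ereal t \<le> tzero epsg x d"
  shows "\<bar>(x + t *\<^sub>R (Smat epsg x *v d)) $ i\<bar> = \<bar>x $ i\<bar> + t * (sgn (x $ i) * svec epsg x $ i * d $ i)"
proof (cases "\<bar>x $ i\<bar> > sqrt epsg")
  case large: True
  then have s: "svec epsg x $ i = 1"
    by (simp add: svec_def)
  then have y: "(x + t *\<^sub>R (Smat epsg x *v d)) $ i = x $ i + t * d $ i"
    by (simp add: Smat_mult_vec)
  have "x $ i \<noteq> 0"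
    using large epsg by auto
  then consider (pos) "x $ i > 0" | (neg) "x $ i < 0"
    by linarith
  then show ?thesis
  proof cases
    case pos
    have "t * d $ i \<ge> - x $ i"
    proof (cases "d $ i < 0")
      case True
      then have "i \<in> Jplus epsg x d"
        using large pos by (auto simp: Jplus_def)
      then have "t \<le> - x $ i / d $ i"
        using emin_le[OF _ _ tp[unfolded tplus_def]] by simp
      then show ?thesis
        using True by (simp add: field_simps)
    qed (use t pos mult_nonneg_nonneg[of t "d $ i"] in linarith)
    then show ?thesis
      unfolding y using pos by (simp add: s)
  next
    case neg
    have "t * d $ i \<le> - x $ i"
    proof (cases "d $ i > 0")
      case True
      then have "i \<in> Jminus epsg x d"
        using large neg by (auto simp: Jminus_def)
      then have "t \<le> - x $ i / d $ i"
        using emin_le[OF _ _ tm[unfolded tminus_def]] by simp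
      then show ?thesis
        using True by (simp add: field_simps)
    qed (use t neg mult_nonneg_nonpos[of t "d $ i"] in linarith)
    then show ?thesis
      unfolding y using neg by (simp add: s)
  qed
next
  case small: False
  then have y: "(x + t *\<^sub>R (Smat epsg x *v d)) $ i = x $ i * (1 + t * d $ i)"
    by (simp add: Smat_mult_vec svec_def algebra_simps)
  have "1 + t * d $ i \<ge> 0"
  proof (cases "d $ i < 0")
    case True
    then have "i \<in> Jzero epsg x d"
      using small by (auto simp: Jzero_def)
    then have "t \<le> - 1 / d $ i"
      using emin_le[OF _ _ tz[unfolded tzero_def]] by simp
    then show ?thesis
      using True by (simp add: field_simps)
  qed (use t mult_nonneg_nonneg[of t "d $ i"] in linarith)
  then have "\<bar>x $ i * (1 + t * d $ i)\<bar> = \<bar>x $ i\<bar> + t * (\<bar>x $ i\<bar> * d $ i)"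
    by (simp only: abs_mult abs_of_nonneg) (simp add: algebra_simps)
  moreover have "sgn (x $ i) * svec epsg x $ i = \<bar>x $ i\<bar>"
    using small by (simp add: svec_def sgn_if)
  ultimately show ?thesis
    by (simp only: y)
qed

lemma l1norm_step:
  assumes "0 \<le> epsg" "0 < t"
    and "ereal t \<le> tplus epsg x d" "ereal t \<le> tminus epsg x d" "ereal t \<le> tzero epsg x d"
  shows "l1norm (x + t *\<^sub>R (Smat epsg x *v d))
    = l1norm x + t * (\<Sum>i\<in>UNIV. sgn (x $ i) * svec epsg x $ i * d $ i)"
  using abs_step_nth[OF assms] by (simp add: l1norm_def sum.distrib sum_distrib_left)

theorem lemma5:
  fixes f :: "real^'n \<Rightarrow> real"
    and grad :: "real^'n \<Rightarrow> real^'n"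
    and Hess :: "real^'n \<Rightarrow> real^'n^'n"
    and lam epsg epsh LH :: real
    and xk u :: "real^'n"
  assumes lam_pos: "lam > 0"
    and epsg: "0 < epsg" "epsg < 1"
    and LH_nonneg: "LH \<ge> 0"
    and grad: "\<And>x. (f has_derivative (\<lambda>h. grad x \<bullet> h)) (at x)"
    and hess: "\<And>x. (grad has_derivative (\<lambda>h. Hess x *v h)) (at x)"
    and hess_cont: "continuous_on UNIV Hess"
    and u_unit: "subnorm (Inz xk) u = 1"
    and u_curv: "subquad (Inz xk) (Smat epsg xk ** Hess xk ** Smat epsg xk) u \<le> - epsh / 2"
    and cubic: "\<And>t. t > 0 \<Longrightarrow>
        ereal t \<le> min (min (tplus epsg xk (dir epsg xk (Hess xk) (gvec grad lam xk) u))
                             (tminus epsg xk (dir epsg xk (Hess xk) (gvec grad lam xk) u)))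
                        (tzero epsg xk (dir epsg xk (Hess xk) (gvec grad lam xk) u)) \<Longrightarrow>
        (let y = xk + t *\<^sub>R (Smat epsg xk *v dir epsg xk (Hess xk) (gvec grad lam xk) u) in
         f y \<le> f xk + grad xk \<bullet> (y - xk) + 1/2 * ((y - xk) \<bullet> (Hess xk *v (y - xk)))
                + LH / 6 * norm (y - xk) ^ 3)"
  shows "\<And>t. t > 0 \<Longrightarrow>
        ereal t \<le> min (min (tplus epsg xk (dir epsg xk (Hess xk) (gvec grad lam xk) u))
                             (tminus epsg xk (dir epsg xk (Hess xk) (gvec grad lam xk) u)))
                        (tzero epsg xk (dir epsg xk (Hess xk) (gvec grad lam xk) u)) \<Longrightarrow>
        (let I = Inz xk; S = Smat epsg xk; H = Hess xk; g = gvec grad lam xk;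
             d = dir epsg xk H g u in
         phi f lam (xk + t *\<^sub>R (S *v d))
           \<le> phi f lam xk + t * subbil I g S d + t^2 / 2 * subquad I (S ** H ** S) d
              + LH / 6 * t^3 * subnorm I d ^ 3)"
proof -
  fix t :: real
  assume t: "t > 0" and t_le: "ereal t \<le> min (min (tplus epsg xk (dir epsg xk (Hess xk) (gvec grad lam xk) u))
                             (tminus epsg xk (dir epsg xk (Hess xk) (gvec grad lam xk) u)))
                        (tzero epsg xk (dir epsg xk (Hess xk) (gvec grad lam xk) u))"
  define d where "d = dir epsg xk (Hess xk) (gvec grad lam xk) u"
  define Sd where "Sd = Smat epsg xk *v d"
  have d_outside: "\<And>i. i \<notin> Inz xk \<Longrightarrow> d $ i = 0"
    by (simp add: d_def dir_nth_outside)
  have "f (xk + t *\<^sub>R Sd) \<le> f xk + grad xk \<bullet> (t *\<^sub>R Sd)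
      + 1/2 * ((t *\<^sub>R Sd) \<bullet> (Hess xk *v (t *\<^sub>R Sd))) + LH / 6 * norm (t *\<^sub>R Sd) ^ 3"
    using cubic[OF t t_le] by (simp add: d_def Sd_def Let_def)
  then have f_step: "f (xk + t *\<^sub>R Sd) \<le> f xk + t * (grad xk \<bullet> Sd)
      + t\<^sup>2 / 2 * (Sd \<bullet> (Hess xk *v Sd)) + LH / 6 * (t * norm Sd) ^ 3"
    using t by (simp add: matrix_scaleR_vector_ac scaleR_matrix_vector_assoc[symmetric]
        power2_eq_square)
  have "(t * norm Sd) ^ 3 \<le> (t * subnorm (Inz xk) d) ^ 3"
    using t epsg(2) norm_Smat_mult_le[of epsg xk d]
    by (intro power_mono) (simp_all add: Sd_def subnorm_eq_norm[OF d_outside])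
  then have "LH / 6 * (t * norm Sd) ^ 3 \<le> LH / 6 * t ^ 3 * subnorm (Inz xk) d ^ 3"
    using LH_nonneg by (simp add: mult_left_mono power_mult_distrib mult.assoc)
  with f_step l1norm_step[of epsg t xk d] t t_le epsg
  show "let I = Inz xk; S = Smat epsg xk; H = Hess xk; g = gvec grad lam xk;
             d = dir epsg xk H g u in
         phi f lam (xk + t *\<^sub>R (S *v d))
           \<le> phi f lam xk + t * subbil I g S d + t^2 / 2 * subquad I (S ** H ** S) d
              + LH / 6 * t^3 * subnorm I d ^ 3"
    by (simp add: Let_def phi_def d_def[symmetric] Sd_def[symmetric] subbil_gvec_Smat[OF d_outside]
        subquad_Smat_Hess[OF d_outside] algebra_simps)
qed

end
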